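(* Let $n\in\{2,3\}$ and let $A=(a_{i,j})\in M_n(\mathcal F)$ be a supertropically nonsingular matrix whose characteristic polynomial $f_A(x)=\det(xI+A)$ has all coefficients tangible and which has $n$ distinct eigenvalues $\lambda_1,\dots,\lambda_n$. For each $k$, let $\lambda_k$ be the corner root of $f_A$ between two subsequent essential monomials $\alpha_{i_{k-1}}x^{n-i_{k-1}}$ and $\alpha_{i_k}x^{n-i_k}$, choose $t_k\in I_{\lambda_k}=\mathrm{Ind}_{i_k}\setminus \mathrm{Ind}_{i_{k-1}}$, and let $v_k$ be the tangible value of the $t_k$-th column of $\mathrm{adj}(A+\lambda_k I)$ (an eigenvector of $A$ for $\lambda_k$). Then $v_1,\dots,v_n$ are supertropically independent.
   Context: $\mathcal F=\mathcal T\cup\mathcal G\cup\{0_{\mathcal F}\}$ is the standard supertropical semifield: $\mathcal T$ is an ordered abelian group (e.g. $(\mathbb R,+)$, written multiplicatively), $\mathcal G=\{a^\nu: a\in\mathcal T\}$ is a copy of it (ghost elements), $\nu:\mathcal F\to\mathcal G\cup\{0_{\mathcal F}\}$ is the identity on $\mathcal G$ and $a\mapsto a^\nu$ on $\mathcal T$, $0_{\mathcal F}=-\infty$. Addition: $a+b$ is the one of $a,b$ of larger $\nu$-value if the $\nu$-values differ, and $a+b=a^\nu$ if $a^\nu=b^\nu$; multiplication is the group operation on $\nu$-values, the product being tangible iff both factors are tangible. For $a\in\mathcal F$, its tangible value $\hat a\in\mathcal T\cup\{0_{\mathcal F}\}$ is the tangible element with $\hat a^\nu=a^\nu$ (applied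 entrywise to vectors). $\det(A)=\sum_{\sigma\in S_n}\prod_i a_{i,\sigma(i)}$; $A$ is supertropically nonsingular if $\det(A)\in\mathcal T$. $\mathrm{adj}(A)_{i,j}=\det$ of the minor of $A$ obtained by deleting row $j$ and column $i$. The characteristic polynomial is $f_A(x)=\det(xI+A)=\sum_{k=0}^n\alpha_kx^{n-k}$, where $\alpha_k$ is the sum of the determinants of all $k\times k$ principal submatrices; when $\alpha_k\in\mathcal T$, $\mathrm{Ind}_k\subseteq[n]$ denotes the index set (of size $k$) on which the unique dominant permutation giving $\alpha_k$ is attained ($\mathrm{Ind}_0=\emptyset$). A monomial is essential if it strictly dominates the polynomial at some point; corner roots are points where two subsequent essential tangible monomials are equal. Eigenvalues of $A$ are the tangible values of roots of $f_A$ (elements $r$ with $f_A(r)\in\mathcal G\cup\{0_{\mathcal F}\}$). Vectors $v_1,\dots,v_k\in\mathcal F^n$ are supertropically dependent if there are $a_1,\dots,a_k\in\mathcal T$ with every coordinate of $\sum a_iv_i$ in $\mathcal G\cup\{0_{\mathcal F}\}$, and independent otherwise. *)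

theory Defs
  imports "HOL-Combinatorics.Permutations"
begin

text \<open>The ordered abelian group T is written additively here (type class
 linordered_ab_group_add, e.g. real); Tan a is the tangible element a, Gh a is
 its ghost a^nu, SZero is 0_F = -infinity.\<close>

datatype 'a st = SZero | Tan 'a | Gh 'a

fun sval :: "'a st \<Rightarrow> 'a" where
  "sval (Tan a) = a"
| "sval (Gh a) = a"
| "sval SZero = undefined"

definition tangible :: "'a st \<Rightarrow> bool" where
  "tangible x \<longleftrightarrow> (\<exists>a. x = Tan a)"

definition ghost0 :: "'a st \<Rightarrow> bool" where
  "ghost0 x \<longleftrightarrow> \<not> tangible x"

definition nu_less :: "'a::linorder st \<Rightarrow> 'a st \<Rightarrow> bool" where
  "nu_less x y \<longleftrightarrow> y \<noteq> SZero \<and> (x = SZero \<or> sval x < sval y)"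

definition nu_eq :: "'a st \<Rightarrow> 'a st \<Rightarrow> bool" where
  "nu_eq x y \<longleftrightarrow> (x = SZero \<and> y = SZero) \<or> (x \<noteq> SZero \<and> y \<noteq> SZero \<and> sval x = sval y)"

fun hat :: "'a st \<Rightarrow> 'a st" where
  "hat SZero = SZero"
| "hat (Tan a) = Tan a"
| "hat (Gh a) = Tan a"

instantiation st :: (linordered_ab_group_add) comm_monoid_add
begin
definition zero_st_def: "0 = SZero"
definition plus_st_def: "x + y =
  (if x = SZero then y else if y = SZero then x
   else if sval x < sval y then y else if sval y < sval x then x else Gh (sval x))"
instance
proof
  fix a b c :: "'a st"
  show "a + b + c = a + (b + c)"
    by (cases a; cases b; cases c) (auto simp: plus_st_def)
  show "a + b = b + a"
    by (cases a; cases b) (auto simp: plus_st_def)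
  show "0 + a = a" by (simp add: plus_st_def zero_st_def)
qed
end

instantiation st :: (linordered_ab_group_add) comm_monoid_mult
begin
definition one_st_def: "1 = Tan 0"
fun times_st :: "'a st \<Rightarrow> 'a st \<Rightarrow> 'a st" where
  "times_st SZero y = SZero"
| "times_st x SZero = SZero"
| "times_st (Tan a) (Tan b) = Tan (a + b)"
| "times_st x y = Gh (sval x + sval y)"
instance
proof
  fix a b c :: "'a st"
  show "a * b * c = a * (b * c)"
    by (cases a; cases b; cases c) (auto simp: add.assoc)
  show "a * b = b * a"
    by (cases a; cases b) (auto simp: add.commute)
  show "1 * a = a" by (cases a) (auto simp: one_st_def)
qed
end

section \<open>Matrices (n x n, indices 0..<n, as functions nat \<Rightarrow> nat \<Rightarrow> 'a st)\<close>

type_synonym 'a smat = "nat \<Rightarrow> nat \<Rightarrow> 'a st"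

definition pdet :: "'a::linordered_ab_group_add smat \<Rightarrow> nat set \<Rightarrow> 'a st" where
  "pdet A S = (\<Sum>\<sigma>\<in>{\<sigma>. \<sigma> permutes S}. \<Prod>i\<in>S. A i (\<sigma> i))"

definition sdet :: "'a::linordered_ab_group_add smat \<Rightarrow> nat \<Rightarrow> 'a st" where
  "sdet A n = pdet A {..<n}"

definition skip :: "nat \<Rightarrow> nat \<Rightarrow> nat" where
  "skip k i = (if i < k then i else Suc i)"

definition minor :: "'a smat \<Rightarrow> nat \<Rightarrow> nat \<Rightarrow> 'a smat" where
  "minor A r c = (\<lambda>i j. A (skip r i) (skip c j))"

definition sadj :: "'a::linordered_ab_group_add smat \<Rightarrow> nat \<Rightarrow> 'a smat" where
  "sadj A n = (\<lambda>i j. sdet (minor A j i) (n - 1))"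

definition add_diag :: "'a::linordered_ab_group_add smat \<Rightarrow> 'a st \<Rightarrow> 'a smat" where
  "add_diag A l = (\<lambda>i j. if i = j then A i j + l else A i j)"

definition char_coeff :: "'a::linordered_ab_group_add smat \<Rightarrow> nat \<Rightarrow> nat \<Rightarrow> 'a st" where
  "char_coeff A n k = (\<Sum>S\<in>{S. S \<subseteq> {..<n} \<and> card S = k}. pdet A S)"

definition char_poly_eval :: "'a::linordered_ab_group_add smat \<Rightarrow> nat \<Rightarrow> 'a st \<Rightarrow> 'a st" where
  "char_poly_eval A n x = (\<Sum>k\<le>n. char_coeff A n k * x ^ (n - k))"

definition Ind :: "'a::linordered_ab_group_add smat \<Rightarrow> nat \<Rightarrow> nat \<Rightarrow> nat set" where
  "Ind A n k = (THE S. S \<subseteq> {..<n} \<and> card S = k \<and>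
      (\<exists>\<sigma>. \<sigma> permutes S \<and> (\<Prod>i\<in>S. A i (\<sigma> i)) = char_coeff A n k))"

definition essential :: "'a::linordered_ab_group_add smat \<Rightarrow> nat \<Rightarrow> nat \<Rightarrow> bool" where
  "essential A n k \<longleftrightarrow> k \<le> n \<and> (\<exists>a. tangible a \<and>
     (\<forall>j\<le>n. j \<noteq> k \<longrightarrow> nu_less (char_coeff A n j * a ^ (n - j)) (char_coeff A n k * a ^ (n - k))))"

definition eigenvalues :: "'a::linordered_ab_group_add smat \<Rightarrow> nat \<Rightarrow> 'a st set" where
  "eigenvalues A n = {r. tangible r \<and> ghost0 (char_poly_eval A n r)}"

definition st_dependent :: "nat \<Rightarrow> (nat \<Rightarrow> nat \<Rightarrow> 'a::linordered_ab_group_add st) \<Rightarrow> nat \<Rightarrow> bool" where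
  "st_dependent n v m \<longleftrightarrow> (\<exists>c. (\<forall>i\<in>{1..m}. tangible (c i)) \<and>
      (\<forall>j<n. ghost0 (\<Sum>i\<in>{1..m}. c i * v i j)))"

definition st_independent :: "nat \<Rightarrow> (nat \<Rightarrow> nat \<Rightarrow> 'a::linordered_ab_group_add st) \<Rightarrow> nat \<Rightarrow> bool" where
  "st_independent n v m \<longleftrightarrow> \<not> st_dependent n v m"

end

(* Every monomial of f_A being essential, the corner equations give alpha_k = lambda_1 ... lambda_k,
   i.e. alpha_k = l_1 + ... + l_k additively with lambda_k = l_k, and essentiality (strict
   concavity of k |-> alpha_k) makes the roots strictly decreasing.  The unique dominant
   permutations then nest: Ind_1 = {t_1}, Ind_2 = {t_1, t_2}, Ind_3 = {t_1, t_2, t_3}.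

   Independence follows from a tropical nonsingularity criterion: if the diagonal
   v_1(t_1) ... v_n(t_n) strictly nu-dominates every other permutation product, the v_k are
   independent, since a dependence gives each k a rival f k /= k with
   c_k v_k(t_k) <=_nu c_(f k) v_(f k)(t_k), and a cycle of f is a permutation whose product is
   at least the diagonal.  The dominance is checked by expanding the 2 x 2 minors forming the
   entries v_k(j): every monomial is a product of cycles of A, bounded through the dominant
   principal minors by sums of the l_k, and l_1 > l_2 > l_3 makes each bound strict. *)

theory Submission
  imports Defs
begin

section \<open>Supertropical arithmetic\<close>

instance st :: (linordered_ab_group_add) comm_semiring_1
proof
  fix a b c :: "'a st"
  show "(a + b) * c = a * c + b * c"
    by (cases a; cases b; cases c) (auto simp: plus_st_def)
  show "0 * a = 0" "a * 0 = 0"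
    by (cases a; simp add: zero_st_def)+
  show "(0::'a st) \<noteq> 1"
    by (simp add: zero_st_def one_st_def)
qed

definition nu_le :: "'a::linorder st \<Rightarrow> 'a st \<Rightarrow> bool" where
  "nu_le x y \<longleftrightarrow> x = SZero \<or> (y \<noteq> SZero \<and> sval x \<le> sval y)"

declare zero_st_def [simp]

context
  fixes x y z :: "'a::linordered_ab_group_add st"
begin

lemma add_SZero [simp]: "x + SZero = x" "SZero + x = x"
  using add_0_right[of x] add_0_left[of x] by simp_all

lemma hat_mult: "hat (x * y) = hat x * hat y"
  by (cases x; cases y) auto

lemma tangible_Tan [simp]: "tangible (Tan a)"
  by (simp add: tangible_def)

lemma tangible_mult: "tangible x \<Longrightarrow> tangible y \<Longrightarrow> tangible (x * y)"
  by (auto simp: tangible_def)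

lemma tangible_nonzero: "tangible x \<Longrightarrow> x \<noteq> SZero"
  by (auto simp: tangible_def)

lemma nu_less_Tan_Tan [simp]: "nu_less (Tan a) (Tan b) \<longleftrightarrow> a < b"
  by (simp add: nu_less_def)

lemma nu_le_Tan_Tan [simp]: "nu_le (Tan a) (Tan b) \<longleftrightarrow> a \<le> b"
  by (simp add: nu_le_def)

lemma not_nu_less_iff: "\<not> nu_less x y \<longleftrightarrow> nu_le y x"
  by (auto simp: nu_less_def nu_le_def)

lemma nu_less_imp_nu_le: "nu_less x y \<Longrightarrow> nu_le x y"
  by (auto simp: nu_less_def nu_le_def)

lemma nu_le_less_trans: "nu_le x y \<Longrightarrow> nu_less y z \<Longrightarrow> nu_less x z"
  by (auto simp: nu_less_def nu_le_def)

lemma nu_less_le_trans: "nu_less x y \<Longrightarrow> nu_le y z \<Longrightarrow> nu_less x z"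
  by (auto simp: nu_less_def nu_le_def)

lemma nu_le_trans: "nu_le x y \<Longrightarrow> nu_le y z \<Longrightarrow> nu_le x z"
  by (auto simp: nu_le_def)

lemma nu_less_add_iff [simp]: "nu_less (x + y) z \<longleftrightarrow> nu_less x z \<and> nu_less y z"
  by (cases x; cases y; cases z) (auto simp: nu_less_def plus_st_def)

lemma nu_le_add_left: "nu_le x (x + y)"
  by (cases x; cases y) (auto simp: nu_le_def plus_st_def)

lemma nu_less_hat_iff [simp]: "nu_less (hat x) y \<longleftrightarrow> nu_less x y"
  by (cases x) (auto simp: nu_less_def)

lemma add_nu_less_absorb: "nu_less y x \<Longrightarrow> x + y = x"
  by (cases x; cases y) (auto simp: nu_less_def plus_st_def)

lemma nu_le_refl [simp]: "nu_le x x"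
  by (simp add: nu_le_def)

lemma nu_le_antisym_less: "nu_le x y \<Longrightarrow> nu_less y x \<Longrightarrow> False"
  by (auto simp: nu_less_def nu_le_def)

lemma nu_le_add_cases: "nu_le (x + y) x \<or> nu_le (x + y) y"
  by (cases x; cases y) (auto simp: nu_le_def plus_st_def)

lemma tangible_add_nu_le_imp_less: "tangible (x + y) \<Longrightarrow> nu_le y x \<Longrightarrow> nu_less y x"
  by (cases x; cases y) (auto simp: tangible_def nu_le_def nu_less_def plus_st_def split: if_splits)

lemma nu_le_mult: "nu_le x y \<Longrightarrow> nu_le x' y' \<Longrightarrow> nu_le (x * x') (y * y')"
  for x' y' :: "'a st"
  by (cases x; cases y; cases x'; cases y') (auto simp: nu_le_def add_mono)

lemma nu_less_mult: "nu_less x y \<Longrightarrow> nu_le x' y' \<Longrightarrow> y' \<noteq> SZero \<Longrightarrow> nu_less (x * x') (y * y')"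
  for x' y' :: "'a st"
  by (cases x; cases y; cases x'; cases y') (auto simp: nu_less_def nu_le_def add_less_le_mono)

lemma nu_less_mult_cancel: "z \<noteq> SZero \<Longrightarrow> nu_less (x * z) (y * z) \<longleftrightarrow> nu_less x y"
  by (cases x; cases y; cases z) (auto simp: nu_less_def)

lemma nu_le_mult_cancel: "z \<noteq> SZero \<Longrightarrow> nu_le (x * z) (y * z) \<longleftrightarrow> nu_le x y"
  by (cases x; cases y; cases z) (auto simp: nu_le_def)

lemma mult_tangible_cancel: "tangible z \<Longrightarrow> x * z = y * z \<longleftrightarrow> x = y"
  by (cases x; cases y; cases z) (auto simp: tangible_def)

end

lemma tangible_power: "tangible x \<Longrightarrow> tangible (x ^ m)"
  for x :: "'a::linordered_ab_group_add st"
  by (induction m) (auto simp: one_st_def intro: tangible_mult)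

lemma nu_less_bound:
  fixes x :: "'a::linordered_ab_group_add st"
  shows "nu_le x (Tan a) \<Longrightarrow> a < b \<Longrightarrow> nu_less x (Tan b)"
  using nu_le_less_trans[of x "Tan a" "Tan b"] by simp

lemma nu_less_monomial:
  fixes x :: "'a::linordered_ab_group_add st"
  assumes "nu_le x (Tan a)" "a + c < b"
  shows "nu_less (x * Tan c) (Tan b)"
  using nu_le_less_trans[OF nu_le_mult[OF assms(1) nu_le_refl[of "Tan c"]]] assms(2) by simp

lemma nu_less_monomial_strict:
  fixes x :: "'a::linordered_ab_group_add st"
  assumes "nu_less x (Tan a)" "a + c \<le> b"
  shows "nu_less (x * Tan c) (Tan b)"
  using nu_less_le_trans[OF nu_less_mult[OF assms(1) nu_le_refl[of "Tan c"]]] assms(2) by simp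

lemma nu_le_mult_Tan:
  fixes x y :: "'a::linordered_ab_group_add st"
  shows "nu_le x (Tan a) \<Longrightarrow> nu_le y (Tan b) \<Longrightarrow> nu_le (x * y) (Tan (a + b))"
  using nu_le_mult[of x "Tan a" y "Tan b"] by simp

lemma nu_less_mult_Tan:
  fixes x y :: "'a::linordered_ab_group_add st"
  shows "nu_less x (Tan a) \<Longrightarrow> nu_le y (Tan b) \<Longrightarrow> nu_less (x * y) (Tan (a + b))"
  using nu_less_mult[of x "Tan a" y "Tan b"] by simp

lemma nu_le_Tan_mult_iff [simp]: "nu_le (Tan a * x) (Tan (a + b)) \<longleftrightarrow> nu_le x (Tan b)"
  for x :: "'a::linordered_ab_group_add st"
  by (cases x) (auto simp: nu_le_def)

lemma nu_less_Tan_mult_iff [simp]: "nu_less (Tan a * x) (Tan (a + b)) \<longleftrightarrow> nu_less x (Tan b)"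
  for x :: "'a::linordered_ab_group_add st"
  by (cases x) (auto simp: nu_less_def)

lemma Tan_add: "Tan (a + b) = Tan a * Tan b"
  by simp

lemma hat_mult_Tan: "hat x * Tan c = hat (x * Tan c)" "Tan c * hat x = hat (Tan c * x)"
  for x :: "'a::linordered_ab_group_add st"
  by (cases x; simp)+

lemma nu_le_sum_member:
  fixes f :: "'b \<Rightarrow> 'a::linordered_ab_group_add st"
  assumes "finite F" "y \<in> F"
  shows "nu_le (f y) (sum f F)"
  using nu_le_add_left[of "f y" "sum f (F - {y})"] by (simp add: sum.remove[OF assms])

lemma nu_less_sum:
  fixes f :: "'b \<Rightarrow> 'a::linordered_ab_group_add st"
  assumes "\<And>y. y \<in> F \<Longrightarrow> nu_less (f y) z" "z \<noteq> SZero"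
  shows "nu_less (sum f F) z"
  using assms
proof (induction F rule: infinite_finite_induct)
  case empty
  then show ?case by (simp add: nu_less_def)
qed (auto simp: nu_less_def[of SZero])

lemma sum_eq_dominant_term:
  fixes f :: "'b \<Rightarrow> 'a::linordered_ab_group_add st"
  assumes "finite F" "x \<in> F" "f x \<noteq> SZero" "\<And>y. y \<in> F - {x} \<Longrightarrow> nu_less (f y) (f x)"
  shows "sum f F = f x"
proof -
  have "nu_less (sum f (F - {x})) (f x)"
    using assms(3,4) by (intro nu_less_sum) auto
  then show ?thesis
    by (simp add: sum.remove[OF assms(1,2)] add_nu_less_absorb)
qed

lemma sum_attains_nu_value:
  fixes f :: "'b \<Rightarrow> 'a::linordered_ab_group_add st"
  assumes "finite F" "sum f F \<noteq> SZero"
  shows "\<exists>x\<in>F. nu_le (sum f F) (f x)"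
  using assms
proof (induction F rule: finite_induct)
  case (insert a G)
  show ?case
  proof (cases "nu_le (sum f (insert a G)) (f a)")
    case False
    then have "nu_le (sum f (insert a G)) (sum f G)"
      using nu_le_add_cases insert.hyps by (metis sum.insert)
    then have "sum f G \<noteq> SZero"
      using insert.prems by (auto simp: nu_le_def)
    then obtain x where "x \<in> G" "nu_le (sum f G) (f x)"
      using insert.IH by blast
    then show ?thesis
      using \<open>nu_le (sum f (insert a G)) (sum f G)\<close> nu_le_trans by blast
  qed blast
qed simp

lemma tangible_sum_dominant_term:
  fixes f :: "'b \<Rightarrow> 'a::linordered_ab_group_add st"
  assumes "finite F" "tangible (sum f F)"
  obtains x where "x \<in> F" "f x = sum f F" "\<And>y. y \<in> F - {x} \<Longrightarrow> nu_less (f y) (f x)"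
proof -
  obtain x where x: "x \<in> F" "nu_le (sum f F) (f x)"
    using sum_attains_nu_value[OF assms(1) tangible_nonzero[OF assms(2)]] by blast
  define rest where "rest = sum f (F - {x})"
  have split: "sum f F = f x + rest"
    unfolding rest_def by (rule sum.remove[OF assms(1) x(1)])
  have "nu_le rest (sum f F)"
    unfolding split using nu_le_add_left[of rest "f x"] by (simp add: add.commute)
  then have "nu_less rest (f x)"
    using assms(2) x(2) split by (metis nu_le_trans tangible_add_nu_le_imp_less)
  moreover have "nu_le (f y) rest" if "y \<in> F - {x}" for y
    unfolding rest_def using assms(1) that by (intro nu_le_sum_member) auto
  ultimately show ?thesis
    using that x(1) split by (metis add_nu_less_absorb nu_le_less_trans)
qed

lemma nu_le_prod:
  fixes f g :: "'b \<Rightarrow> 'a::linordered_ab_group_add st"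
  assumes "\<And>k. k \<in> K \<Longrightarrow> nu_le (f k) (g k)"
  shows "nu_le (prod f K) (prod g K)"
  using assms by (induction K rule: infinite_finite_induct) (auto intro: nu_le_mult)

lemma tangible_prod:
  fixes f :: "'b \<Rightarrow> 'a::linordered_ab_group_add st"
  assumes "\<And>k. k \<in> K \<Longrightarrow> tangible (f k)"
  shows "tangible (prod f K)"
  using assms by (induction K rule: infinite_finite_induct) (auto simp: one_st_def intro: tangible_mult)

section \<open>Independence from a strictly dominant diagonal\<close>

lemma ghost0_sum_has_rival:
  fixes g :: "'b \<Rightarrow> 'a::linordered_ab_group_add st"
  assumes "finite I" "k \<in> I" "tangible (g k)" "ghost0 (sum g I)"
  shows "\<exists>i\<in>I - {k}. nu_le (g k) (g i)"
proof (rule ccontr)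
  assume "\<not> ?thesis"
  then have "sum g I = g k"
    using assms(1-3) by (intro sum_eq_dominant_term) (auto simp: not_nu_less_iff[symmetric] tangible_nonzero)
  then show False
    using assms(3,4) by (simp add: ghost0_def)
qed

lemma finite_self_map_has_cycle:
  assumes "finite K" "K \<noteq> {}" "f ` K \<subseteq> K"
  shows "\<exists>C\<subseteq>K. C \<noteq> {} \<and> bij_betw f C C"
  using assms
proof (induction "card K" arbitrary: K rule: less_induct)
  case less
  show ?case
  proof (cases "inj_on f K")
    case True
    then have "bij_betw f K K"
      using endo_inj_surj less.prems by (simp add: bij_betw_def)
    then show ?thesis
      using less.prems by blast
  next
    case False
    then have "card (f ` K) < card K"
      using card_image_le inj_on_iff_eq_card less.prems(1) le_neq_implies_less by blast
    moreover have "f ` f ` K \<subseteq> f ` K"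
      using less.prems(3) by blast
    ultimately obtain C where "C \<subseteq> f ` K" "C \<noteq> {}" "bij_betw f C C"
      using less.hyps less.prems by (meson finite_imageI image_is_empty)
    then show ?thesis
      using less.prems(3) by blast
  qed
qed

lemma nu_le_prod_along_cycle:
  fixes w :: "nat \<Rightarrow> nat \<Rightarrow> 'a::linordered_ab_group_add st"
  assumes "finite K" "C \<subseteq> K" "bij_betw f C C"
    and c: "\<And>k. k \<in> C \<Longrightarrow> tangible (c k)"
    and rival: "\<And>k. k \<in> C \<Longrightarrow> nu_le (c k * w k k) (c (f k) * w (f k) k)"
  shows "nu_le (\<Prod>k\<in>K. w k k) (\<Prod>k\<in>K. w (restrict_id f C k) k)"
proof -
  have c_nonzero: "(\<Prod>k\<in>C. c k) \<noteq> SZero"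
    by (intro tangible_nonzero tangible_prod c)
  have "nu_le (\<Prod>k\<in>C. c k * w k k) (\<Prod>k\<in>C. c (f k) * w (f k) k)"
    by (intro nu_le_prod rival)
  moreover have "(\<Prod>k\<in>C. c (f k)) = (\<Prod>k\<in>C. c k)"
    using prod.reindex_bij_betw[OF assms(3)] .
  ultimately have "nu_le ((\<Prod>k\<in>C. w k k) * (\<Prod>k\<in>C. c k)) ((\<Prod>k\<in>C. w (f k) k) * (\<Prod>k\<in>C. c k))"
    by (simp add: prod.distrib mult.commute)
  then have "nu_le (\<Prod>k\<in>C. w k k) (\<Prod>k\<in>C. w (restrict_id f C k) k)"
    using nu_le_mult_cancel[OF c_nonzero] by (simp add: restrict_id_def)
  then have "nu_le ((\<Prod>k\<in>K - C. w k k) * (\<Prod>k\<in>C. w k k))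
      ((\<Prod>k\<in>K - C. w (restrict_id f C k) k) * (\<Prod>k\<in>C. w (restrict_id f C k) k))"
    by (simp add: nu_le_mult restrict_id_def)
  then show ?thesis
    by (simp only: prod.subset_diff[OF assms(2,1)])
qed

lemma st_independent_if_dominant_diagonal:
  fixes v :: "nat \<Rightarrow> nat \<Rightarrow> 'a::linordered_ab_group_add st"
  assumes "1 \<le> m" "\<pi> ` {1..m} \<subseteq> {..<n}"
    and diagonal: "\<And>k. k \<in> {1..m} \<Longrightarrow> tangible (v k (\<pi> k))"
    and dominant: "\<And>\<sigma>. \<sigma> permutes {1..m} \<Longrightarrow> \<sigma> \<noteq> id \<Longrightarrow>
      nu_less (\<Prod>k\<in>{1..m}. v (\<sigma> k) (\<pi> k)) (\<Prod>k\<in>{1..m}. v k (\<pi> k))"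
  shows "st_independent n v m"
  unfolding st_independent_def st_dependent_def
proof
  assume "\<exists>c. (\<forall>i\<in>{1..m}. tangible (c i)) \<and> (\<forall>j<n. ghost0 (\<Sum>i\<in>{1..m}. c i * v i j))"
  then obtain c where c: "\<And>i. i \<in> {1..m} \<Longrightarrow> tangible (c i)"
    and ghost: "\<And>j. j < n \<Longrightarrow> ghost0 (\<Sum>i\<in>{1..m}. c i * v i j)"
    by blast
  let ?K = "{1..m}"
  have rival: "\<exists>i\<in>?K - {k}. nu_le (c k * v k (\<pi> k)) (c i * v i (\<pi> k))" if "k \<in> ?K" for k
  proof (rule ghost0_sum_has_rival)
    show "ghost0 (\<Sum>i\<in>?K. c i * v i (\<pi> k))"
      using that assms(2) by (intro ghost) blast
    show "tangible (c k * v k (\<pi> k))"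
      using that by (intro tangible_mult c diagonal)
  qed (use that in simp_all)
  have "\<forall>k\<in>?K. \<exists>i. i \<in> ?K - {k} \<and> nu_le (c k * v k (\<pi> k)) (c i * v i (\<pi> k))"
    using rival by blast
  then obtain f where f: "\<And>k. k \<in> ?K \<Longrightarrow> f k \<in> ?K - {k}"
    "\<And>k. k \<in> ?K \<Longrightarrow> nu_le (c k * v k (\<pi> k)) (c (f k) * v (f k) (\<pi> k))"
    by metis
  have "?K \<noteq> {}"
    using assms(1) by simp
  moreover have "f ` ?K \<subseteq> ?K"
    using f(1) by blast
  ultimately obtain C where C: "C \<subseteq> ?K" "C \<noteq> {}" "bij_betw f C C"
    using finite_self_map_has_cycle[of ?K f] by blast
  define \<sigma> where "\<sigma> = restrict_id f C"
  have \<sigma>_perm: "\<sigma> permutes ?K"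
    unfolding \<sigma>_def using permutes_restrict_id[OF C(3)] C(1) by (rule permutes_subset)
  obtain k where "k \<in> C"
    using C(2) by blast
  then have "\<sigma> k \<noteq> k"
    using f(1) C(1) by (auto simp: \<sigma>_def restrict_id_def)
  then have "\<sigma> \<noteq> id"
    by auto
  moreover have "nu_le (\<Prod>k\<in>?K. v k (\<pi> k)) (\<Prod>k\<in>?K. v (\<sigma> k) (\<pi> k))"
    unfolding \<sigma>_def using C(1,3) c f(2)
    by (intro nu_le_prod_along_cycle[where w = "\<lambda>i k. v i (\<pi> k)" and c = c]) auto
  ultimately show False
    using dominant[OF \<sigma>_perm] nu_le_antisym_less by blast
qed

lemma permutes_two_non_id:
  assumes "\<sigma> permutes {1..2::nat}" "\<sigma> \<noteq> id"
  shows "\<sigma> 1 = 2 \<and> \<sigma> 2 = 1"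
proof -
  have "\<sigma> 1 \<in> {1..2}" "\<sigma> 2 \<in> {1..2}" "\<sigma> 1 \<noteq> \<sigma> 2"
    using permutes_in_image[OF assms(1)] permutes_inj[OF assms(1)] by (auto dest: injD)
  moreover have "\<sigma> 1 \<noteq> 1 \<or> \<sigma> 2 \<noteq> 2"
  proof (rule ccontr)
    assume "\<not> ?thesis"
    then have "\<sigma> x = x" for x
      using permutes_not_in[OF assms(1), of x] by (cases "x = 1 \<or> x = 2") auto
    then show False
      using assms(2) by auto
  qed
  ultimately show ?thesis
    by auto
qed

lemma permutes_three_non_id:
  assumes "\<sigma> permutes {1..3::nat}" "\<sigma> \<noteq> id"
  shows "(\<sigma> 1, \<sigma> 2, \<sigma> 3) \<in> {(2, 1, 3), (3, 2, 1), (1, 3, 2), (2, 3, 1), (3, 1, 2)}"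
proof -
  have "{1..3::nat} = {1, 2, 3}"
    by auto
  then have "\<sigma> 1 \<in> {1, 2, 3}" "\<sigma> 2 \<in> {1, 2, 3}" "\<sigma> 3 \<in> {1, 2, 3}"
    "\<sigma> 1 \<noteq> \<sigma> 2" "\<sigma> 1 \<noteq> \<sigma> 3" "\<sigma> 2 \<noteq> \<sigma> 3"
    using permutes_in_image[OF assms(1)] permutes_inj[OF assms(1)] by (auto dest: injD)
  moreover have "\<sigma> 1 \<noteq> 1 \<or> \<sigma> 2 \<noteq> 2 \<or> \<sigma> 3 \<noteq> 3"
  proof (rule ccontr)
    assume "\<not> ?thesis"
    then have "\<sigma> x = x" for x
      using permutes_not_in[OF assms(1), of x] by (cases "x = 1 \<or> x = 2 \<or> x = 3") auto
    then show False
      using assms(2) by auto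
  qed
  ultimately show ?thesis
    by (simp, elim disjE) simp_all
qed

section \<open>Coefficients and corner roots of the characteristic polynomial\<close>

definition char_terms :: "nat \<Rightarrow> nat \<Rightarrow> (nat set \<times> (nat \<Rightarrow> nat)) set" where
  "char_terms n k = Sigma {S. S \<subseteq> {..<n} \<and> card S = k} (\<lambda>S. {\<sigma>. \<sigma> permutes S})"

lemma finite_char_terms: "finite (char_terms n k)"
  unfolding char_terms_def
  by (rule finite_SigmaI) (auto intro: finite_subset[of _ "Pow {..<n}"] finite_permutations finite_subset)

lemma char_coeff_eq_sum_terms:
  "char_coeff A n k = (\<Sum>(S, \<sigma>)\<in>char_terms n k. \<Prod>i\<in>S. A i (\<sigma> i))"
  unfolding char_coeff_def pdet_def char_terms_def
  by (rule sum.Sigma) (auto intro: finite_subset[of _ "Pow {..<n}"] finite_permutations finite_subset)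

lemma term_nu_le_char_coeff:
  fixes A :: "'a::linordered_ab_group_add smat"
  assumes "S \<subseteq> {..<n}" "\<sigma> permutes S"
  shows "nu_le (\<Prod>i\<in>S. A i (\<sigma> i)) (char_coeff A n (card S))"
  using nu_le_sum_member[OF finite_char_terms, of "(S, \<sigma>)" n "card S" "\<lambda>(S, \<sigma>). \<Prod>i\<in>S. A i (\<sigma> i)"] assms
  by (simp add: char_terms_def char_coeff_eq_sum_terms)

lemma char_coeff_dominant_term:
  fixes A :: "'a::linordered_ab_group_add smat"
  assumes "tangible (char_coeff A n k)"
  obtains \<sigma> where "Ind A n k \<subseteq> {..<n}" "card (Ind A n k) = k" "\<sigma> permutes Ind A n k"
    "(\<Prod>i\<in>Ind A n k. A i (\<sigma> i)) = char_coeff A n k"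
    "\<And>S \<tau>. S \<subseteq> {..<n} \<Longrightarrow> card S = k \<Longrightarrow> \<tau> permutes S \<Longrightarrow> (S, \<tau>) \<noteq> (Ind A n k, \<sigma>) \<Longrightarrow>
       nu_less (\<Prod>i\<in>S. A i (\<tau> i)) (char_coeff A n k)"
proof -
  let ?w = "\<lambda>(S, \<sigma>). \<Prod>i\<in>S. A i (\<sigma> i)"
  have tangible_sum: "tangible (sum ?w (char_terms n k))"
    using assms by (simp add: char_coeff_eq_sum_terms)
  obtain y where y: "y \<in> char_terms n k" "?w y = sum ?w (char_terms n k)"
    "\<And>z. z \<in> char_terms n k - {y} \<Longrightarrow> nu_less (?w z) (?w y)"
    using tangible_sum_dominant_term[OF finite_char_terms tangible_sum] by blast
  obtain S0 \<sigma>0 where y_eq: "y = (S0, \<sigma>0)"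
    by fastforce
  have dom: "(S0, \<sigma>0) \<in> char_terms n k" "?w (S0, \<sigma>0) = char_coeff A n k"
    "\<And>z. z \<in> char_terms n k - {(S0, \<sigma>0)} \<Longrightarrow> nu_less (?w z) (?w (S0, \<sigma>0))"
    using y unfolding y_eq by (simp_all add: char_coeff_eq_sum_terms)
  then have S0: "S0 \<subseteq> {..<n}" "card S0 = k" "\<sigma>0 permutes S0"
    by (auto simp: char_terms_def)
  have less: "nu_less (\<Prod>i\<in>S. A i (\<tau> i)) (char_coeff A n k)"
    if "S \<subseteq> {..<n}" "card S = k" "\<tau> permutes S" "(S, \<tau>) \<noteq> (S0, \<sigma>0)" for S \<tau>
    using dom(2) dom(3)[of "(S, \<tau>)"] that by (simp add: char_terms_def)
  have "Ind A n k = S0"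
    unfolding Ind_def
  proof (rule the_equality)
    show "S0 \<subseteq> {..<n} \<and> card S0 = k \<and> (\<exists>\<sigma>. \<sigma> permutes S0 \<and> (\<Prod>i\<in>S0. A i (\<sigma> i)) = char_coeff A n k)"
      using S0 dom(2) by auto
  next
    fix S assume "S \<subseteq> {..<n} \<and> card S = k \<and> (\<exists>\<tau>. \<tau> permutes S \<and> (\<Prod>i\<in>S. A i (\<tau> i)) = char_coeff A n k)"
    then show "S = S0"
      using less by (metis nu_less_def order.irrefl prod.inject)
  qed
  then show ?thesis
    using that S0 dom(2) less by auto
qed

lemma Ind_subset_card:
  fixes A :: "'a::linordered_ab_group_add smat"
  assumes "tangible (char_coeff A n k)"
  shows "Ind A n k \<subseteq> {..<n}" "card (Ind A n k) = k"
  using char_coeff_dominant_term[OF assms] by metis+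

lemma Ind_dominant_perm:
  fixes A :: "'a::linordered_ab_group_add smat"
  assumes "tangible (char_coeff A n k)"
  shows "\<exists>\<sigma>. \<sigma> permutes Ind A n k \<and> (\<Prod>i\<in>Ind A n k. A i (\<sigma> i)) = char_coeff A n k"
  using char_coeff_dominant_term[OF assms] by metis

lemma pdet_Ind:
  fixes A :: "'a::linordered_ab_group_add smat"
  assumes "tangible (char_coeff A n k)"
  shows "pdet A (Ind A n k) = char_coeff A n k"
proof -
  obtain \<sigma> where \<sigma>: "Ind A n k \<subseteq> {..<n}" "card (Ind A n k) = k" "\<sigma> permutes Ind A n k"
    "(\<Prod>i\<in>Ind A n k. A i (\<sigma> i)) = char_coeff A n k"
    and less: "\<And>\<tau>. \<tau> permutes Ind A n k \<Longrightarrow> \<tau> \<noteq> \<sigma> \<Longrightarrow>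
       nu_less (\<Prod>i\<in>Ind A n k. A i (\<tau> i)) (char_coeff A n k)"
    using char_coeff_dominant_term[OF assms] by (metis prod.inject)
  have "finite {\<tau>. \<tau> permutes Ind A n k}"
    using \<sigma>(1) by (intro finite_permutations) (auto intro: finite_subset)
  then show ?thesis
    unfolding pdet_def using \<sigma>(3,4) less assms
    by (subst sum_eq_dominant_term[where x = \<sigma>]) (auto simp: tangible_nonzero)
qed

lemma pdet_less_char_coeff:
  fixes A :: "'a::linordered_ab_group_add smat"
  assumes "tangible (char_coeff A n k)" "S \<subseteq> {..<n}" "card S = k" "S \<noteq> Ind A n k"
  shows "nu_less (pdet A S) (char_coeff A n k)"
proof -
  obtain \<sigma> where "\<And>\<tau>. \<tau> permutes S \<Longrightarrow> (S, \<tau>) \<noteq> (Ind A n k, \<sigma>) \<Longrightarrow>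
       nu_less (\<Prod>i\<in>S. A i (\<tau> i)) (char_coeff A n k)"
    using char_coeff_dominant_term[OF assms(1)] assms(2,3) by metis
  then show ?thesis
    unfolding pdet_def using assms(1,4) by (intro nu_less_sum) (auto simp: tangible_nonzero)
qed

lemma char_coeff_0: "char_coeff A n 0 = 1"
proof -
  have "{S. S \<subseteq> {..<n} \<and> card S = 0} = {{}}"
    using finite_subset[of _ "{..<n}"] by auto
  then show ?thesis
    by (simp add: char_coeff_def pdet_def)
qed

lemma pdet_singleton: "pdet A {a} = A a a"
  by (simp add: pdet_def)

lemma pdet_doubleton:
  assumes "a \<noteq> b"
  shows "pdet A {a, b} = A a a * A b b + A a b * A b a"
proof -
  have "{\<sigma>. \<sigma> permutes {a, b}} = {id, Transposition.transpose a b}"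
    by (auto simp: permutes_doubleton_iff)
  moreover have "id \<noteq> Transposition.transpose a b"
    using assms by (metis id_apply transpose_apply_first)
  ultimately show ?thesis
    using assms unfolding pdet_def by (simp add: mult.commute)
qed

lemma Ind_one:
  fixes A :: "'a::linordered_ab_group_add smat"
  assumes "tangible (char_coeff A n 1)" "p \<in> Ind A n 1"
  shows "Ind A n 1 = {p}" "A p p = char_coeff A n 1"
proof -
  have "card (Ind A n 1) = 1"
    using Ind_subset_card(2)[OF assms(1)] .
  then show Ind: "Ind A n 1 = {p}"
    using assms(2) by (metis card_1_singletonE singletonD)
  show "A p p = char_coeff A n 1"
    using pdet_Ind[OF assms(1)] unfolding Ind by (simp add: pdet_singleton)
qed

lemma diag_mult_char_coeff_le:
  fixes A :: "'a::linordered_ab_group_add smat"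
  assumes "tangible (char_coeff A n k)" "p < n" "p \<notin> Ind A n k"
  shows "nu_le (A p p * char_coeff A n k) (char_coeff A n (Suc k))"
proof -
  obtain \<sigma> where \<sigma>: "\<sigma> permutes Ind A n k" "(\<Prod>i\<in>Ind A n k. A i (\<sigma> i)) = char_coeff A n k"
    using Ind_dominant_perm[OF assms(1)] by blast
  have fin: "finite (Ind A n k)"
    using Ind_subset_card(1)[OF assms(1)] finite_subset by blast
  have "insert p (Ind A n k) \<subseteq> {..<n}"
    using Ind_subset_card(1)[OF assms(1)] assms(2) by blast
  moreover have "\<sigma> permutes insert p (Ind A n k)"
    using \<sigma>(1) by (rule permutes_subset) auto
  moreover have "card (insert p (Ind A n k)) = Suc k"
    using Ind_subset_card(2)[OF assms(1)] assms(3) fin by simp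
  ultimately have "nu_le (\<Prod>i\<in>insert p (Ind A n k). A i (\<sigma> i)) (char_coeff A n (Suc k))"
    using term_nu_le_char_coeff by metis
  then show ?thesis
    using fin assms(3) permutes_not_in[OF \<sigma>(1) assms(3)] \<sigma>(2) by simp
qed

lemma essential_concave:
  fixes A :: "'a::linordered_ab_group_add smat"
  assumes "essential A n (Suc k)" "Suc k < n"
  shows "nu_less (char_coeff A n k * char_coeff A n (Suc (Suc k)))
    (char_coeff A n (Suc k) * char_coeff A n (Suc k))"
proof -
  let ?\<alpha> = "char_coeff A n"
  obtain x where x: "tangible x"
    and dom: "\<And>j. j \<le> n \<Longrightarrow> j \<noteq> Suc k \<Longrightarrow> nu_less (?\<alpha> j * x ^ (n - j)) (?\<alpha> (Suc k) * x ^ (n - Suc k))"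
    using assms(1) unfolding essential_def by blast
  define m where "m = n - Suc (Suc k)"
  have powers: "n - k = Suc (Suc m)" "n - Suc k = Suc m" "n - Suc (Suc k) = m"
    using assms(2) by (simp_all add: m_def)
  have x0: "x \<noteq> SZero" "x ^ m \<noteq> SZero"
    using x by (simp_all add: tangible_nonzero tangible_power)
  have "nu_less ((?\<alpha> k * x) * x * x ^ m) (?\<alpha> (Suc k) * x * x ^ m)"
    using dom[of k] assms(2) by (simp add: powers mult_ac)
  then have lower: "nu_less (?\<alpha> k * x) (?\<alpha> (Suc k))"
    using x0 by (simp add: nu_less_mult_cancel)
  have "nu_less (?\<alpha> (Suc (Suc k)) * x ^ m) (?\<alpha> (Suc k) * x * x ^ m)"
    using dom[of "Suc (Suc k)"] assms(2) by (simp add: powers mult_ac)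
  then have upper: "nu_less (?\<alpha> (Suc (Suc k))) (?\<alpha> (Suc k) * x)"
    using x0 by (simp add: nu_less_mult_cancel)
  have "nu_less (?\<alpha> k * x * ?\<alpha> (Suc (Suc k))) (?\<alpha> (Suc k) * (?\<alpha> (Suc k) * x))"
    using upper by (intro nu_less_mult[OF lower nu_less_imp_nu_le]) (auto simp: nu_less_def)
  then have "nu_less ((?\<alpha> k * ?\<alpha> (Suc (Suc k))) * x) ((?\<alpha> (Suc k) * ?\<alpha> (Suc k)) * x)"
    by (simp add: mult_ac)
  then show ?thesis
    using nu_less_mult_cancel[OF x0(1)] by blast
qed

lemma corner_roots_decreasing:
  fixes A :: "'a::linordered_ab_group_add smat"
  assumes "essential A n k" "0 < k" "k < n"
    and "tangible (char_coeff A n (k - 1))" "tangible (\<rho>\<^sub>1)"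
    and "char_coeff A n (k - 1) * \<rho>\<^sub>1 = char_coeff A n k"
    and "char_coeff A n k * \<rho>\<^sub>2 = char_coeff A n (k + 1)"
  shows "nu_less \<rho>\<^sub>2 \<rho>\<^sub>1"
proof -
  obtain i where k: "k = Suc i"
    using assms(2) gr0_implies_Suc by blast
  let ?c = "char_coeff A n i * char_coeff A n i * \<rho>\<^sub>1"
  have e1: "char_coeff A n (Suc i) = char_coeff A n i * \<rho>\<^sub>1"
    using assms(6) k by simp
  have e2: "char_coeff A n (Suc (Suc i)) = char_coeff A n i * \<rho>\<^sub>1 * \<rho>\<^sub>2"
    using assms(7) k e1 by simp
  have "nu_less (\<rho>\<^sub>2 * ?c) (\<rho>\<^sub>1 * ?c)"
    using essential_concave[of A n i] assms(1,3) unfolding k e2 e1 by (simp add: mult_ac)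
  moreover have "?c \<noteq> SZero"
    using assms(4,5) unfolding k by (intro tangible_nonzero tangible_mult) simp_all
  ultimately show ?thesis
    using nu_less_mult_cancel by blast
qed

lemma corner_root_eq:
  fixes a b l :: "'a::linordered_ab_group_add st"
  assumes "tangible l" "a * l ^ Suc m = b * l ^ m"
  shows "a * l = b"
proof -
  have "(a * l) * l ^ m = b * l ^ m"
    using assms(2) by (simp add: mult_ac)
  then show ?thesis
    using mult_tangible_cancel[OF tangible_power[OF assms(1)]] by blast
qed

lemma corner_root_of_corner_eq:
  fixes A :: "'a::linordered_ab_group_add smat"
  assumes "k \<in> {1..n}" "tangible l"
    and "char_coeff A n (k - 1) * l ^ (n - (k - 1)) = char_coeff A n k * l ^ (n - k)"
  shows "char_coeff A n (k - 1) * l = char_coeff A n k"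
proof -
  have "n - (k - 1) = Suc (n - k)"
    using assms(1) by auto
  then show ?thesis
    using corner_root_eq[OF assms(2)] assms(3) by simp
qed

lemma strict_mono_on_shift:
  fixes f :: "nat \<Rightarrow> nat"
  assumes "strict_mono_on {0..n} f" "i + j \<le> n"
  shows "f i + j \<le> f (i + j)"
  using assms(2)
proof (induction j)
  case (Suc j)
  then have "f (i + j) < f (i + Suc j)"
    by (intro strict_mono_onD[OF assms(1)]) auto
  then show ?case
    using Suc by simp
qed simp

lemma strict_mono_on_self_map_eq_id:
  fixes f :: "nat \<Rightarrow> nat"
  assumes "strict_mono_on {0..n} f" "f ` {0..n} \<subseteq> {0..n}" "k \<le> n"
  shows "f k = k"
proof -
  have "f 0 + k \<le> f k"
    using strict_mono_on_shift[OF assms(1), of 0 k] assms(3) by simp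
  moreover have "f k + (n - k) \<le> f n"
    using strict_mono_on_shift[OF assms(1), of k "n - k"] assms(3) by simp
  moreover have "f n \<le> n"
    using assms(2) by (simp add: image_subset_iff)
  ultimately show ?thesis
    using assms(3) by simp
qed

lemma essential_index_map_eq_id:
  fixes A :: "'a::linordered_ab_group_add smat" and ii :: "nat \<Rightarrow> nat"
  assumes "strict_mono_on {0..n} ii" "{k. essential A n k} = ii ` {0..n}" "k \<le> n"
  shows "ii k = k"
proof -
  have "ii ` {0..n} \<subseteq> {0..n}"
    unfolding assms(2)[symmetric] by (auto simp: essential_def)
  then show ?thesis
    using strict_mono_on_self_map_eq_id[OF assms(1) _ assms(3)] by blast
qed

lemma sadj_2x2:
  assumes "a \<noteq> t" "c \<noteq> j" "{t, a, j, c} \<subseteq> {..<2}"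
  shows "sadj B 2 j t = B a c"
proof -
  have "a = skip t 0" "c = skip j 0"
    using assms by (auto simp: skip_def)
  then show ?thesis
    by (simp add: sadj_def sdet_def pdet_singleton minor_def lessThan_Suc)
qed

lemma sadj_3x3:
  assumes "distinct [t, a, b]" "distinct [j, c, d]" "{t, a, b, j, c, d} \<subseteq> {..<3}"
  shows "sadj B 3 j t = B a c * B b d + B a d * B b c"
proof -
  have rows: "{skip t 0, skip t 1} = {a, b}" and cols: "{skip j 0, skip j 1} = {c, d}"
    using assms by (auto simp: skip_def)
  have "{..<3 - 1} = {0::nat, 1}"
    by auto
  then have "sadj B 3 j t = B (skip t 0) (skip j 0) * B (skip t 1) (skip j 1)
      + B (skip t 0) (skip j 1) * B (skip t 1) (skip j 0)"
    by (simp add: sadj_def sdet_def minor_def pdet_doubleton)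
  also have "\<dots> = B a c * B b d + B a d * B b c"
    using rows cols assms(1,2) by (auto simp: doubleton_eq_iff ac_simps)
  finally show ?thesis .
qed

section \<open>Two eigenvectors\<close>

lemma st_independent_adj_columns_2:
  fixes A :: "'a::linordered_ab_group_add smat"
  assumes indices: "p < 2" "q < 2" "p \<noteq> q"
    and roots: "l2 < l1"
    and diag: "A p p = Tan l1" "nu_less (A q q) (Tan l1)"
    and cycle: "nu_le (A p q * A q p) (Tan (l1 + l2))"
    and v: "\<And>j. j < 2 \<Longrightarrow> v 1 j = hat (sadj (add_diag A (Tan l1)) 2 j p)"
      "\<And>j. j < 2 \<Longrightarrow> v 2 j = hat (sadj (add_diag A (Tan l2)) 2 j q)"
  shows "st_independent 2 v 2"
proof -
  have sadj: "sadj B 2 j t = B a c" if "a \<noteq> t" "c \<noteq> j" "{t, a, j, c} \<subseteq> {p, q}" for B :: "'a smat" and t a j c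
    using that indices by (intro sadj_2x2) auto
  have "A q q + Tan l1 = Tan l1" "A p p + Tan l2 = Tan l1"
    using diag roots by (simp_all add: add.commute add_nu_less_absorb)
  then have v1: "v 1 p = Tan l1" "v 1 q = hat (A q p)"
    and v2: "v 2 q = Tan l1" "v 2 p = hat (A p q)"
    using v(1)[of p] v(1)[of q] v(2)[of q] v(2)[of p] indices
      sadj[where t = p and a = q and j = p and c = q] sadj[where t = p and a = q and j = q and c = p]
      sadj[where t = q and a = p and j = q and c = p] sadj[where t = q and a = p and j = p and c = q]
    by (simp_all add: add_diag_def)
  define col where "col k = [p, q] ! (k - 1)" for k :: nat
  have two: "{1..2::nat} = {1, 2}"
    by auto
  show ?thesis
  proof (rule st_independent_if_dominant_diagonal[where \<pi> = col])
    show "col ` {1..2} \<subseteq> {..<2}"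
      using indices unfolding two by (auto simp: col_def)
    show "tangible (v k (col k))" if "k \<in> {1..2}" for k
      using that v1 v2 unfolding two col_def by auto
  next
    fix \<sigma> :: "nat \<Rightarrow> nat" assume \<sigma>: "\<sigma> permutes {1..2}" "\<sigma> \<noteq> id"
    have "nu_less (hat (A p q) * hat (A q p)) (Tan l1 * Tan l1)"
      using nu_le_less_trans[OF cycle] roots by (simp add: hat_mult[symmetric])
    then show "nu_less (\<Prod>k\<in>{1..2}. v (\<sigma> k) (col k)) (\<Prod>k\<in>{1..2}. v k (col k))"
      using permutes_two_non_id[OF \<sigma>] v1 v2 unfolding two by (simp add: col_def)
  qed simp
qed

lemma corner_roots_2:
  fixes A :: "'a::linordered_ab_group_add smat"
  assumes ess: "essential A 2 1"
    and roots: "\<And>k. k \<in> {1..2} \<Longrightarrow> tangible (lam k) \<and> char_coeff A 2 (k - 1) * lam k = char_coeff A 2 k"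
  obtains l1 l2 where "lam 1 = Tan l1" "lam 2 = Tan l2" "l2 < l1"
    "char_coeff A 2 1 = Tan l1" "char_coeff A 2 2 = Tan (l1 + l2)"
proof -
  have r: "tangible (lam 1)" "char_coeff A 2 0 * lam 1 = char_coeff A 2 1"
    "tangible (lam 2)" "char_coeff A 2 1 * lam 2 = char_coeff A 2 2"
    using roots[of 1] roots[of 2] by simp_all
  obtain l1 l2 where lam: "lam 1 = Tan l1" "lam 2 = Tan l2"
    using r by (auto simp: tangible_def)
  have c1: "char_coeff A 2 1 = Tan l1"
    using r(2) unfolding lam by (simp add: char_coeff_0 one_st_def)
  have c2: "char_coeff A 2 2 = Tan (l1 + l2)"
    using r(4) unfolding c1 lam by simp
  have "nu_less (lam 2) (lam 1)"
    using corner_roots_decreasing[of A 2 1 "lam 1" "lam 2"] ess r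
    by (simp add: char_coeff_0 one_st_def numeral_2_eq_2)
  then show ?thesis
    using that lam c1 c2 by simp
qed

lemma st_independent_eigenvectors_2:
  fixes A :: "'a::linordered_ab_group_add smat"
  assumes ess: "essential A 2 1"
    and roots: "\<And>k. k \<in> {1..2} \<Longrightarrow> tangible (lam k) \<and> char_coeff A 2 (k - 1) * lam k = char_coeff A 2 k"
    and cols: "\<And>k. k \<in> {1..2} \<Longrightarrow> t k \<in> Ind A 2 k - Ind A 2 (k - 1)"
    and v: "\<And>k j. k \<in> {1..2} \<Longrightarrow> j < 2 \<Longrightarrow> v k j = hat (sadj (add_diag A (lam k)) 2 j (t k))"
  shows "st_independent 2 v 2"
proof -
  obtain l1 l2 where lam: "lam 1 = Tan l1" "lam 2 = Tan l2" and decreasing: "l2 < l1"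
    and coeffs: "char_coeff A 2 1 = Tan l1" "char_coeff A 2 2 = Tan (l1 + l2)"
    using corner_roots_2[OF ess roots] by blast
  define p q where "p = t 1" and "q = t 2"
  have tangible: "tangible (char_coeff A 2 1)" "tangible (char_coeff A 2 2)"
    using coeffs by simp_all
  have Ind1: "Ind A 2 1 = {p}" and diag_p: "A p p = Tan l1"
    using Ind_one[OF tangible(1), of p] cols[of 1] coeffs(1) unfolding p_def by simp_all
  have Ind2_all: "Ind A 2 2 = {..<2}"
    using Ind_subset_card[OF tangible(2)] by (intro card_subset_eq) auto
  have indices: "p < 2" "q < 2" "p \<noteq> q"
    using Ind_subset_card(1)[OF tangible(1)] Ind1 Ind2_all cols[of 2] unfolding q_def by auto
  then have Ind2: "Ind A 2 2 = {p, q}"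
    unfolding Ind2_all by (auto simp: less_Suc_eq)
  have "nu_less (A q q) (Tan l1)"
    using pdet_less_char_coeff[OF tangible(1), of "{q}"] indices Ind1 coeffs by (simp add: pdet_singleton)
  moreover have "nu_le (A p q * A q p) (Tan (l1 + l2))"
    using pdet_Ind[OF tangible(2)] nu_le_add_left[of "A p q * A q p" "A p p * A q q"] Ind2 coeffs indices
    by (simp add: pdet_doubleton add.commute)
  moreover have "v 1 j = hat (sadj (add_diag A (Tan l1)) 2 j p)" if "j < 2" for j
    using v[of 1 j] that lam unfolding p_def by simp
  moreover have "v 2 j = hat (sadj (add_diag A (Tan l2)) 2 j q)" if "j < 2" for j
    using v[of 2 j] that lam unfolding q_def by simp
  ultimately show ?thesis
    by (rule st_independent_adj_columns_2[where A = A, OF indices decreasing diag_p])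
qed

section \<open>Three eigenvectors\<close>

text \<open>Here \<open>p, q, r\<close> are the chosen columns \<open>t\<^sub>1, t\<^sub>2, t\<^sub>3\<close> and \<open>l1 > l2 > l3\<close> the corner
  roots; additively \<open>\<alpha>\<^sub>1 = l1\<close>, \<open>\<alpha>\<^sub>2 = l1 + l2\<close>, \<open>\<alpha>\<^sub>3 = l1 + l2 + l3\<close>, and the assumptions record
  which principal minors attain these coefficients.\<close>

locale dominant_minors_3 =
  fixes A :: "'a::linordered_ab_group_add smat" and p q r :: nat and l1 l2 l3 :: 'a
  assumes indices: "distinct [p, q, r]" "{p, q, r} \<subseteq> {..<3}"
    and roots_decreasing: "l3 < l2" "l2 < l1"
    and diag_p: "A p p = Tan l1"
    and diag_q: "nu_less (A q q) (Tan l1)"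
    and minor_pq: "pdet A {p, q} = Tan (l1 + l2)"
    and minor_pr: "nu_less (pdet A {p, r}) (Tan (l1 + l2))"
    and minor_pqr: "\<And>\<sigma>. \<sigma> permutes {p, q, r} \<Longrightarrow> nu_le (\<Prod>i\<in>{p, q, r}. A i (\<sigma> i)) (Tan (l1 + l2 + l3))"
begin

lemma root_3_less_1: "l3 < l1"
  using roots_decreasing by simp

lemma minor_pq_expand: "Tan l1 * A q q + A p q * A q p = Tan (l1 + l2)"
  using minor_pq indices by (simp add: pdet_doubleton diag_p)

lemma diag_q_le: "nu_le (A q q) (Tan l2)"
  using nu_le_add_left[of "Tan l1 * A q q" "A p q * A q p"] by (simp add: minor_pq_expand)

lemma cycle_pq_le: "nu_le (A p q * A q p) (Tan (l1 + l2))"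
  using nu_le_add_left[of "A p q * A q p" "Tan l1 * A q q"] by (simp add: minor_pq_expand add.commute)

lemma diag_r_less: "nu_less (A r r) (Tan l2)"
  and cycle_pr_less: "nu_less (A p r * A r p) (Tan (l1 + l2))"
  using minor_pr indices by (simp_all add: pdet_doubleton diag_p)

lemma cycle_pr_le: "nu_le (A p r * A r p) (Tan (l1 + l2))"
  using cycle_pr_less by (rule nu_less_imp_nu_le)

lemma prod_pqr: "(\<Prod>i\<in>{p, q, r}. f i) = f p * f q * f r"
  using indices by (simp add: mult.assoc)

lemma cycle_qr_le: "nu_le (A q r * A r q) (Tan (l2 + l3))"
proof -
  have "nu_le (\<Prod>i\<in>{p, q, r}. A i (Transposition.transpose q r i)) (Tan (l1 + l2 + l3))"
    using indices by (intro minor_pqr permutes_swap_id) auto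
  then show ?thesis
    using indices by (simp add: prod_pqr diag_p mult.assoc add.assoc)
qed

lemma cycle_pqr_le: "nu_le (A p q * A q r * A r p) (Tan (l1 + l2 + l3))"
proof -
  have "nu_le (\<Prod>i\<in>{p, q, r}. A i ((Transposition.transpose p q \<circ> Transposition.transpose q r) i))
      (Tan (l1 + l2 + l3))"
    using indices by (intro minor_pqr permutes_compose permutes_swap_id) auto
  then show ?thesis
    using indices by (simp add: prod_pqr)
qed

lemma cycle_prq_le: "nu_le (A p r * A r q * A q p) (Tan (l1 + l2 + l3))"
proof -
  have "nu_le (\<Prod>i\<in>{p, q, r}. A i ((Transposition.transpose p r \<circ> Transposition.transpose r q) i))
      (Tan (l1 + l2 + l3))"
    using indices by (intro minor_pqr permutes_compose permutes_swap_id) auto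
  then show ?thesis
    using indices by (simp add: prod_pqr mult_ac)
qed

definition eigvec :: "nat \<Rightarrow> nat \<Rightarrow> 'a st" where
  "eigvec k j = hat (sadj (add_diag A (Tan ([l1, l2, l3] ! (k - 1)))) 3 j ([p, q, r] ! (k - 1)))"

lemma adj_entry:
  assumes "distinct [t, a, b]" "distinct [j, c, d]" "{t, a, b, j, c, d} \<subseteq> {p, q, r}"
  shows "sadj (add_diag A l) 3 j t = add_diag A l a c * add_diag A l b d + add_diag A l a d * add_diag A l b c"
  using assms indices by (intro sadj_3x3) auto

lemma add_diag_absorb: "nu_less (A i i) (Tan l) \<Longrightarrow> add_diag A (Tan l) i i = Tan l"
  by (simp add: add_diag_def add.commute add_nu_less_absorb)

lemma add_diag_p: "l < l1 \<Longrightarrow> add_diag A (Tan l) p p = Tan l1"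
  by (simp add: add_diag_def diag_p add_nu_less_absorb)

lemma add_diag_diag: "add_diag A l i i = A i i + l"
  by (simp add: add_diag_def)

lemma add_diag_off: "i \<noteq> j \<Longrightarrow> add_diag A l i j = A i j"
  by (simp add: add_diag_def)

lemma eigvec_1:
  "eigvec 1 p = Tan (l1 + l1)"
  "eigvec 1 q = hat (A q p * Tan l1 + A q r * A r p)"
  "eigvec 1 r = hat (A q p * A r q + Tan l1 * A r p)"
proof -
  have "nu_less (A r r) (Tan l1)"
    using nu_less_le_trans[OF diag_r_less] roots_decreasing by simp
  then have qq: "add_diag A (Tan l1) q q = Tan l1" and rr: "add_diag A (Tan l1) r r = Tan l1"
    using diag_q by (simp_all add: add_diag_absorb)
  have "nu_less (A q r * A r q) (Tan (l1 + l1))"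
    by (rule nu_le_less_trans[OF cycle_qr_le]) (simp add: add_strict_mono roots_decreasing root_3_less_1)
  then show "eigvec 1 p = Tan (l1 + l1)"
    using indices by (simp add: eigvec_def adj_entry[of p q r p q r] qq rr add_diag_off add_nu_less_absorb)
  show "eigvec 1 q = hat (A q p * Tan l1 + A q r * A r p)"
    using indices by (simp add: eigvec_def adj_entry[of p q r q p r] rr add_diag_off)
  show "eigvec 1 r = hat (A q p * A r q + Tan l1 * A r p)"
    using indices by (simp add: eigvec_def adj_entry[of p q r r p q] qq add_diag_off)
qed

lemma eigvec_2:
  "eigvec 2 q = Tan (l1 + l2)"
  "eigvec 2 p = hat (A p q * Tan l2 + A p r * A r q)"
  "eigvec 2 r = hat (Tan l1 * A r q + A p q * A r p)"
proof -
  have pp: "add_diag A (Tan l2) p p = Tan l1" and rr: "add_diag A (Tan l2) r r = Tan l2"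
    using diag_r_less roots_decreasing by (auto intro: add_diag_p add_diag_absorb)
  show "eigvec 2 q = Tan (l1 + l2)"
    using indices cycle_pr_less
    by (simp add: eigvec_def adj_entry[of q p r q p r] pp rr add_diag_off add_nu_less_absorb)
  show "eigvec 2 p = hat (A p q * Tan l2 + A p r * A r q)"
    using indices by (simp add: eigvec_def adj_entry[of q p r p q r] rr add_diag_off)
  show "eigvec 2 r = hat (Tan l1 * A r q + A p q * A r p)"
    using indices by (simp add: eigvec_def adj_entry[of q p r r p q] pp add_diag_off)
qed

lemma eigvec_3:
  "eigvec 3 r = Tan (l1 + l2)"
  "eigvec 3 p = hat (A p q * A q r + A p r * (A q q + Tan l3))"
  "eigvec 3 q = hat (Tan l1 * A q r + A p r * A q p)"
proof -
  have pp: "add_diag A (Tan l3) p p = Tan l1"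
    using root_3_less_1 by (rule add_diag_p)
  have qq: "add_diag A (Tan l3) q q = A q q + Tan l3"
    by (rule add_diag_diag)
  have "Tan l1 * (A q q + Tan l3) + A p q * A q p = Tan (l1 + l2) + Tan (l1 + l3)"
    using minor_pq_expand by (simp add: distrib_left ac_simps)
  also have "\<dots> = Tan (l1 + l2)"
    using roots_decreasing by (simp add: add_nu_less_absorb)
  finally show "eigvec 3 r = Tan (l1 + l2)"
    using indices by (simp add: eigvec_def adj_entry[of r p q r p q] pp qq add_diag_off)
  show "eigvec 3 p = hat (A p q * A q r + A p r * (A q q + Tan l3))"
    using indices by (simp add: eigvec_def adj_entry[of r p q p q r] qq add_diag_off)
  show "eigvec 3 q = hat (Tan l1 * A q r + A p r * A q p)"
    using indices by (simp add: eigvec_def adj_entry[of r p q q p r] pp add_diag_off)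
qed

abbreviation diag_weight :: 'a where
  "diag_weight \<equiv> l1 + l1 + (l1 + l2) + (l1 + l2)"

lemma eigvec_diag: "eigvec 1 p * eigvec 2 q * eigvec 3 r = Tan diag_weight"
  unfolding eigvec_1 eigvec_2 eigvec_3 by (simp add: add.assoc)

lemmas root_facts = roots_decreasing root_3_less_1 add_strict_mono add_less_le_mono add_le_less_mono

text \<open>After expanding
  the adjugate entries, every monomial is a product of cycles of \<open>A\<close> and roots, bounded by the
  lemmas above, and the strict decrease of the roots makes each bound strict. In the final step,
  splitting \<open>Tan (a + b)\<close> into atomic factors makes the AC-normal forms of the expanded goal
  and of the monomial bounds coincide.\<close>

lemma below_diagonal_213: "nu_less (eigvec 2 p * eigvec 1 q * eigvec 3 r) (Tan diag_weight)"
proof -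
  have "nu_less (A p q * A q p * Tan (l2 + l1 + (l1 + l2))) (Tan diag_weight)"
    by (rule nu_less_monomial[OF cycle_pq_le]) (simp add: root_facts)
  moreover have "nu_less (A p q * A q r * A r p * Tan (l2 + (l1 + l2))) (Tan diag_weight)"
    by (rule nu_less_monomial[OF cycle_pqr_le]) (simp add: root_facts)
  moreover have "nu_less (A p r * A r q * A q p * Tan (l1 + (l1 + l2))) (Tan diag_weight)"
    by (rule nu_less_monomial[OF cycle_prq_le]) (simp add: root_facts)
  moreover have "nu_less (A p r * A r p * (A q r * A r q) * Tan (l1 + l2)) (Tan diag_weight)"
    by (rule nu_less_monomial[OF nu_le_mult_Tan[OF cycle_pr_le cycle_qr_le]])
      (simp add: root_facts)
  ultimately show ?thesis
    unfolding eigvec_1 eigvec_2 eigvec_3 hat_mult[symmetric] hat_mult_Tan nu_less_hat_iff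
    by (simp del: times_st.simps add: Tan_add ring_distribs mult_ac)
qed

lemma below_diagonal_321: "nu_less (eigvec 3 p * eigvec 2 q * eigvec 1 r) (Tan diag_weight)"
proof -
  have "nu_less (A p q * A q p * (A q r * A r q) * Tan (l1 + l2)) (Tan diag_weight)"
    by (rule nu_less_monomial[OF nu_le_mult_Tan[OF cycle_pq_le cycle_qr_le]]) (simp add: root_facts)
  moreover have "nu_less (A p q * A q r * A r p * Tan (l1 + l1 + l2)) (Tan diag_weight)"
    by (rule nu_less_monomial[OF cycle_pqr_le]) (simp add: root_facts)
  moreover have "nu_less (A p r * A r q * A q p * A q q * Tan (l1 + l2)) (Tan diag_weight)"
    by (rule nu_less_monomial[OF nu_le_mult_Tan[OF cycle_prq_le diag_q_le]]) (simp add: root_facts)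
  moreover have "nu_less (A p r * A r p * A q q * Tan (l1 + l1 + l2)) (Tan diag_weight)"
    by (rule nu_less_monomial[OF nu_le_mult_Tan[OF cycle_pr_le diag_q_le]]) (simp add: root_facts)
  moreover have "nu_less (A p r * A r q * A q p * Tan (l3 + l1 + l2)) (Tan diag_weight)"
    by (rule nu_less_monomial[OF cycle_prq_le]) (simp add: root_facts)
  moreover have "nu_less (A p r * A r p * Tan (l3 + l1 + l1 + l2)) (Tan diag_weight)"
    by (rule nu_less_monomial[OF cycle_pr_le]) (simp add: root_facts)
  ultimately show ?thesis
    unfolding eigvec_1 eigvec_2 eigvec_3 hat_mult[symmetric] hat_mult_Tan nu_less_hat_iff
    by (simp del: times_st.simps add: Tan_add ring_distribs mult_ac)
qed

lemma below_diagonal_132: "nu_less (eigvec 1 p * eigvec 3 q * eigvec 2 r) (Tan diag_weight)"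
proof -
  have "nu_less (A q r * A r q * Tan (l1 + l1 + l1 + l1)) (Tan diag_weight)"
    by (rule nu_less_monomial[OF cycle_qr_le]) (simp add: root_facts)
  moreover have "nu_less (A p q * A q r * A r p * Tan (l1 + l1 + l1)) (Tan diag_weight)"
    by (rule nu_less_monomial[OF cycle_pqr_le]) (simp add: root_facts)
  moreover have "nu_less (A p r * A r q * A q p * Tan (l1 + l1 + l1)) (Tan diag_weight)"
    by (rule nu_less_monomial[OF cycle_prq_le]) (simp add: root_facts)
  moreover have "nu_less (A p r * A r p * (A p q * A q p) * Tan (l1 + l1)) (Tan diag_weight)"
    by (rule nu_less_monomial_strict[OF nu_less_mult_Tan[OF cycle_pr_less cycle_pq_le]])
      (simp add: root_facts)
  ultimately show ?thesis
    unfolding eigvec_1 eigvec_2 eigvec_3 hat_mult[symmetric] hat_mult_Tan nu_less_hat_iff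
    by (simp del: times_st.simps add: Tan_add ring_distribs mult_ac)
qed

lemma below_diagonal_231: "nu_less (eigvec 2 p * eigvec 3 q * eigvec 1 r) (Tan diag_weight)"
proof -
  have "nu_less (A p q * A q p * (A q r * A r q) * Tan (l2 + l1)) (Tan diag_weight)"
    by (rule nu_less_monomial[OF nu_le_mult_Tan[OF cycle_pq_le cycle_qr_le]]) (simp add: root_facts)
  moreover have "nu_less (A p q * A q r * A r p * Tan (l2 + l1 + l1)) (Tan diag_weight)"
    by (rule nu_less_monomial[OF cycle_pqr_le]) (simp add: root_facts)
  moreover have "nu_less (A p q * A q p * (A p r * A r q * A q p) * Tan l2) (Tan diag_weight)"
    by (rule nu_less_monomial[OF nu_le_mult_Tan[OF cycle_pq_le cycle_prq_le]])
      (simp add: root_facts)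
  moreover have "nu_less (A p q * A q p * (A p r * A r p) * Tan (l2 + l1)) (Tan diag_weight)"
    by (rule nu_less_monomial[OF nu_le_mult_Tan[OF cycle_pq_le cycle_pr_le]]) (simp add: root_facts)
  moreover have "nu_less (A p r * A r q * A q p * (A q r * A r q) * Tan l1) (Tan diag_weight)"
    by (rule nu_less_monomial[OF nu_le_mult_Tan[OF cycle_prq_le cycle_qr_le]])
      (simp add: root_facts)
  moreover have "nu_less (A p r * A r p * (A q r * A r q) * Tan (l1 + l1)) (Tan diag_weight)"
    by (rule nu_less_monomial[OF nu_le_mult_Tan[OF cycle_pr_le cycle_qr_le]]) (simp add: root_facts)
  moreover have "nu_less (A p r * A r q * A q p * (A p r * A r q * A q p)) (Tan diag_weight)"
    by (rule nu_less_bound[OF nu_le_mult_Tan[OF cycle_prq_le cycle_prq_le]]) (simp add: root_facts)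
  moreover have "nu_less (A p r * A r q * A q p * (A p r * A r p) * Tan l1) (Tan diag_weight)"
    by (rule nu_less_monomial[OF nu_le_mult_Tan[OF cycle_prq_le cycle_pr_le]])
      (simp add: root_facts)
  ultimately show ?thesis
    unfolding eigvec_1 eigvec_2 eigvec_3 hat_mult[symmetric] hat_mult_Tan nu_less_hat_iff
    by (simp del: times_st.simps add: Tan_add ring_distribs mult_ac)
qed

lemma below_diagonal_312: "nu_less (eigvec 3 p * eigvec 1 q * eigvec 2 r) (Tan diag_weight)"
proof -
  have "nu_less (A p q * A q p * (A q r * A r q) * Tan (l1 + l1)) (Tan diag_weight)"
    by (rule nu_less_monomial[OF nu_le_mult_Tan[OF cycle_pq_le cycle_qr_le]]) (simp add: root_facts)
  moreover have "nu_less (A p q * A q r * A r p * (A p q * A q p) * Tan l1) (Tan diag_weight)"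
    by (rule nu_less_monomial[OF nu_le_mult_Tan[OF cycle_pqr_le cycle_pq_le]])
      (simp add: root_facts)
  moreover have "nu_less (A p q * A q r * A r p * (A q r * A r q) * Tan l1) (Tan diag_weight)"
    by (rule nu_less_monomial[OF nu_le_mult_Tan[OF cycle_pqr_le cycle_qr_le]])
      (simp add: root_facts)
  moreover have "nu_less (A p q * A q r * A r p * (A p q * A q r * A r p)) (Tan diag_weight)"
    by (rule nu_less_bound[OF nu_le_mult_Tan[OF cycle_pqr_le cycle_pqr_le]]) (simp add: root_facts)
  moreover have "nu_less (A p r * A r q * A q p * A q q * Tan (l1 + l1)) (Tan diag_weight)"
    by (rule nu_less_monomial[OF nu_le_mult_Tan[OF cycle_prq_le diag_q_le]]) (simp add: root_facts)
  moreover have "nu_less (A p r * A r p * (A p q * A q p) * A q q * Tan l1) (Tan diag_weight)"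
    by (rule nu_less_monomial[OF nu_le_mult_Tan[OF nu_le_mult_Tan[OF cycle_pr_le cycle_pq_le] diag_q_le]])
      (simp add: root_facts)
  moreover have "nu_less (A p r * A r p * (A q r * A r q) * A q q * Tan l1) (Tan diag_weight)"
    by (rule nu_less_monomial[OF nu_le_mult_Tan[OF nu_le_mult_Tan[OF cycle_pr_le cycle_qr_le] diag_q_le]])
      (simp add: root_facts)
  moreover have "nu_less (A p r * A r p * (A p q * A q r * A r p) * A q q) (Tan diag_weight)"
    by (rule nu_less_bound[OF nu_le_mult_Tan[OF nu_le_mult_Tan[OF cycle_pr_le cycle_pqr_le] diag_q_le]])
      (simp add: root_facts)
  moreover have "nu_less (A p r * A r q * A q p * Tan (l3 + l1 + l1)) (Tan diag_weight)"
    by (rule nu_less_monomial[OF cycle_prq_le]) (simp add: root_facts)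
  moreover have "nu_less (A p r * A r p * (A p q * A q p) * Tan (l3 + l1)) (Tan diag_weight)"
    by (rule nu_less_monomial[OF nu_le_mult_Tan[OF cycle_pr_le cycle_pq_le]]) (simp add: root_facts)
  moreover have "nu_less (A p r * A r p * (A q r * A r q) * Tan (l3 + l1)) (Tan diag_weight)"
    by (rule nu_less_monomial[OF nu_le_mult_Tan[OF cycle_pr_le cycle_qr_le]]) (simp add: root_facts)
  moreover have "nu_less (A p r * A r p * (A p q * A q r * A r p) * Tan l3) (Tan diag_weight)"
    by (rule nu_less_monomial[OF nu_le_mult_Tan[OF cycle_pr_le cycle_pqr_le]])
      (simp add: root_facts)
  ultimately show ?thesis
    unfolding eigvec_1 eigvec_2 eigvec_3 hat_mult[symmetric] hat_mult_Tan nu_less_hat_iff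
    by (simp del: times_st.simps add: Tan_add ring_distribs mult_ac)
qed

lemma eigvecs_independent:
  assumes v: "\<And>k j. k \<in> {1..3} \<Longrightarrow> j < 3 \<Longrightarrow> v k j = eigvec k j"
  shows "st_independent 3 v 3"
proof -
  define col where "col k = [p, q, r] ! (k - 1)" for k :: nat
  have col: "col 1 = p" "col 2 = q" "col 3 = r"
    by (simp_all add: col_def)
  have three: "{1..3::nat} = {1, 2, 3}"
    by auto
  have prod_three: "(\<Prod>k\<in>{1..3}. f k) = f 1 * f 2 * f 3" for f :: "nat \<Rightarrow> 'a st"
    unfolding three by (simp add: mult.assoc)
  have v_col: "v k (col i) = eigvec k (col i)" if "k \<in> {1..3}" "i \<in> {1..3}" for k i
    using that indices unfolding three col_def by (intro v) auto
  show ?thesis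
  proof (rule st_independent_if_dominant_diagonal[where \<pi> = col])
    show "col ` {1..3} \<subseteq> {..<3}"
      using indices unfolding three by (auto simp: col_def)
    show "tangible (v k (col k))" if "k \<in> {1..3}" for k
      using that v_col[OF that that] col eigvec_1 eigvec_2 eigvec_3 unfolding three by auto
  next
    fix \<sigma> :: "nat \<Rightarrow> nat" assume \<sigma>: "\<sigma> permutes {1..3}" "\<sigma> \<noteq> id"
    have "\<sigma> k \<in> {1..3}" if "k \<in> {1..3}" for k
      using permutes_in_image[OF \<sigma>(1)] that by simp
    then have "(\<Prod>k\<in>{1..3}. v (\<sigma> k) (col k)) = eigvec (\<sigma> 1) p * eigvec (\<sigma> 2) q * eigvec (\<sigma> 3) r"
      unfolding prod_three by (simp add: v_col col[symmetric])
    moreover have "(\<Prod>k\<in>{1..3}. v k (col k)) = Tan diag_weight"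
      unfolding prod_three eigvec_diag[symmetric] by (simp add: v_col col[symmetric])
    ultimately show "nu_less (\<Prod>k\<in>{1..3}. v (\<sigma> k) (col k)) (\<Prod>k\<in>{1..3}. v k (col k))"
      using permutes_three_non_id[OF \<sigma>] below_diagonal_213 below_diagonal_321 below_diagonal_132 below_diagonal_231 below_diagonal_312
      by auto
  qed simp
qed

end

lemma dominant_minors_3I:
  fixes A :: "'a::linordered_ab_group_add smat"
  assumes coeffs: "char_coeff A 3 1 = Tan l1" "char_coeff A 3 2 = Tan (l1 + l2)"
      "char_coeff A 3 3 = Tan (l1 + l2 + l3)"
    and roots: "l3 < l2" "l2 < l1"
    and cols: "p \<in> Ind A 3 1" "q \<in> Ind A 3 2 - Ind A 3 1" "r \<in> Ind A 3 3 - Ind A 3 2"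
  shows "dominant_minors_3 A p q r l1 l2 l3"
proof -
  have tangible: "tangible (char_coeff A 3 k)" if "k \<in> {1, 2, 3}" for k
    using that coeffs by auto
  have Ind1: "Ind A 3 1 = {p}" and diag_p: "A p p = Tan l1"
    using Ind_one[OF tangible[of 1] cols(1)] coeffs(1) by simp_all
  have indices: "p < 3" "q < 3" "r < 3"
    using cols Ind_subset_card(1)[OF tangible[of 1]] Ind_subset_card(1)[OF tangible[of 2]]
      Ind_subset_card(1)[OF tangible[of 3]] by auto
  have "p \<in> Ind A 3 2"
  proof (rule ccontr)
    assume "p \<notin> Ind A 3 2"
    then have "nu_le (A p p * char_coeff A 3 2) (char_coeff A 3 3)"
      using diag_mult_char_coeff_le[OF tangible[of 2] indices(1)] by (simp add: numeral_3_eq_3)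
    then have "l1 + (l1 + l2) \<le> l1 + l2 + l3"
      using diag_p coeffs by simp
    then show False
      using roots by (simp add: add.assoc)
  qed
  then have Ind2: "Ind A 3 2 = {p, q}"
    using cols(2) Ind1 Ind_subset_card[OF tangible[of 2]]
    by (intro card_subset_eq[symmetric]) (auto intro: finite_subset)
  have distinct: "distinct [p, q, r]"
    using cols(2,3) Ind1 Ind2 by auto
  show ?thesis
  proof
    show "nu_less (A q q) (Tan l1)"
      using pdet_less_char_coeff[OF tangible[of 1], of "{q}"] indices distinct Ind1 coeffs
      by (simp add: pdet_singleton)
    show "pdet A {p, q} = Tan (l1 + l2)"
      using pdet_Ind[OF tangible[of 2]] Ind2 coeffs by simp
    have "{p, r} \<noteq> {p, q}"
      using distinct by (auto simp: doubleton_eq_iff)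
    then show "nu_less (pdet A {p, r}) (Tan (l1 + l2))"
      using pdet_less_char_coeff[OF tangible[of 2], of "{p, r}"] indices distinct Ind2 coeffs by simp
    show "nu_le (\<Prod>i\<in>{p, q, r}. A i (\<sigma> i)) (Tan (l1 + l2 + l3))" if "\<sigma> permutes {p, q, r}" for \<sigma>
    proof -
      have "card {p, q, r} = 3" "{p, q, r} \<subseteq> {..<3}"
        using indices distinct by auto
      then show ?thesis
        using term_nu_le_char_coeff[OF _ that, of 3 A] coeffs(3) by simp
    qed
  qed (use roots diag_p indices distinct in auto)
qed

lemma corner_roots_3:
  fixes A :: "'a::linordered_ab_group_add smat"
  assumes ess: "essential A 3 1" "essential A 3 2"
    and roots: "\<And>k. k \<in> {1..3} \<Longrightarrow> tangible (lam k) \<and> char_coeff A 3 (k - 1) * lam k = char_coeff A 3 k"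
  obtains l1 l2 l3 where "lam 1 = Tan l1" "lam 2 = Tan l2" "lam 3 = Tan l3" "l3 < l2" "l2 < l1"
    "char_coeff A 3 1 = Tan l1" "char_coeff A 3 2 = Tan (l1 + l2)" "char_coeff A 3 3 = Tan (l1 + l2 + l3)"
proof -
  have r: "tangible (lam 1)" "char_coeff A 3 0 * lam 1 = char_coeff A 3 1"
    "tangible (lam 2)" "char_coeff A 3 1 * lam 2 = char_coeff A 3 2"
    "tangible (lam 3)" "char_coeff A 3 2 * lam 3 = char_coeff A 3 3"
    using roots[of 1] roots[of 2] roots[of 3] by simp_all
  obtain l1 l2 l3 where lam: "lam 1 = Tan l1" "lam 2 = Tan l2" "lam 3 = Tan l3"
    using r by (auto simp: tangible_def)
  have c1: "char_coeff A 3 1 = Tan l1"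
    using r(2) unfolding lam by (simp add: char_coeff_0 one_st_def)
  have c2: "char_coeff A 3 2 = Tan (l1 + l2)"
    using r(4) unfolding c1 lam by simp
  have c3: "char_coeff A 3 3 = Tan (l1 + l2 + l3)"
    using r(6) unfolding c2 lam by simp
  note coeffs = c1 c2 c3
  have "nu_less (lam 2) (lam 1)"
    using corner_roots_decreasing[of A 3 1 "lam 1" "lam 2"] ess(1) r
    by (simp add: char_coeff_0 one_st_def numeral_2_eq_2)
  moreover have "nu_less (lam 3) (lam 2)"
    using corner_roots_decreasing[of A 3 2 "lam 2" "lam 3"] ess(2) r coeffs
    by (simp add: numeral_2_eq_2 numeral_3_eq_3)
  ultimately show ?thesis
    using that lam coeffs by simp
qed

lemma st_independent_eigenvectors_3:
  fixes A :: "'a::linordered_ab_group_add smat"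
  assumes ess: "essential A 3 1" "essential A 3 2"
    and roots: "\<And>k. k \<in> {1..3} \<Longrightarrow> tangible (lam k) \<and> char_coeff A 3 (k - 1) * lam k = char_coeff A 3 k"
    and cols: "\<And>k. k \<in> {1..3} \<Longrightarrow> t k \<in> Ind A 3 k - Ind A 3 (k - 1)"
    and v: "\<And>k j. k \<in> {1..3} \<Longrightarrow> j < 3 \<Longrightarrow> v k j = hat (sadj (add_diag A (lam k)) 3 j (t k))"
  shows "st_independent 3 v 3"
proof -
  obtain l1 l2 l3 where lam: "lam 1 = Tan l1" "lam 2 = Tan l2" "lam 3 = Tan l3"
    and decreasing: "l3 < l2" "l2 < l1"
    and coeffs: "char_coeff A 3 1 = Tan l1" "char_coeff A 3 2 = Tan (l1 + l2)" "char_coeff A 3 3 = Tan (l1 + l2 + l3)"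
    using corner_roots_3[OF ess roots] by blast
  interpret dominant_minors_3 A "t 1" "t 2" "t 3" l1 l2 l3
    using cols[of 1] cols[of 2] cols[of 3] by (intro dominant_minors_3I[OF coeffs decreasing]) auto
  have "{1..3::nat} = {1, 2, 3}"
    by auto
  then have "v k j = eigvec k j" if "k \<in> {1..3}" "j < 3" for k j
    using v[OF that] that lam unfolding eigvec_def by auto
  then show ?thesis
    by (rule eigvecs_independent)
qed

theorem proposition3p2:
  fixes A :: "'a::linordered_ab_group_add smat"
    and n :: nat
    and ii :: "nat \<Rightarrow> nat"
    and lam :: "nat \<Rightarrow> 'a st"
    and t :: "nat \<Rightarrow> nat"
    and v :: "nat \<Rightarrow> nat \<Rightarrow> 'a st"
  assumes n23: "n \<in> {2, 3}"
    and nonsing: "tangible (sdet A n)"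
    and coeffs_tangible: "\<forall>k\<le>n. tangible (char_coeff A n k)"
    and distinct_eig: "card (eigenvalues A n) = n"
    and ii_mono: "strict_mono_on {0..n} ii"
    and ii_ess: "{k. essential A n k} = ii ` {0..n}"
    and lam_corner: "\<forall>k\<in>{1..n}. tangible (lam k) \<and>
        char_coeff A n (ii (k - 1)) * lam k ^ (n - ii (k - 1)) =
        char_coeff A n (ii k) * lam k ^ (n - ii k)"
    and t_choice: "\<forall>k\<in>{1..n}. t k \<in> Ind A n (ii k) - Ind A n (ii (k - 1))"
    and v_def: "\<forall>k\<in>{1..n}. \<forall>j<n. v k j = hat (sadj (add_diag A (lam k)) n j (t k))"
  shows "st_independent n v n"
proof -
  \<comment> \<open>Nonsingularity, distinct eigenvalues and tangibility of the coefficients are not used: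
    the corner equations with \<open>\<alpha>\<^sub>0 = 1\<close> already make every \<open>\<alpha>\<^sub>k\<close> tangible.\<close>
  have ii: "ii k = k" if "k \<le> n" for k
    using essential_index_map_eq_id[OF ii_mono ii_ess that] .
  have ess: "essential A n k" if "k \<le> n" for k
    using ii_ess ii[OF that] that by (metis atLeastAtMost_iff image_eqI le0 mem_Collect_eq)
  have shifted: "ii k = k" "ii (k - 1) = k - 1" if "k \<in> {1..n}" for k
    using that ii by auto
  have roots: "tangible (lam k) \<and> char_coeff A n (k - 1) * lam k = char_coeff A n k" if "k \<in> {1..n}" for k
    using bspec[OF lam_corner that] shifted[OF that] corner_root_of_corner_eq[OF that, of "lam k" A] by simp
  have cols: "t k \<in> Ind A n k - Ind A n (k - 1)" if "k \<in> {1..n}" for k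
    using bspec[OF t_choice that] shifted[OF that] by simp
  have v: "v k j = hat (sadj (add_diag A (lam k)) n j (t k))" if "k \<in> {1..n}" "j < n" for k j
    using v_def that by blast
  from n23 consider "n = 2" | "n = 3"
    by blast
  then show ?thesis
  proof cases
    case 1
    then show ?thesis
      using st_independent_eigenvectors_2[of A lam t v] ess roots cols v by simp
  next
    case 2
    then show ?thesis
      using st_independent_eigenvectors_3[of A lam t v] ess roots cols v by simp
  qed
qed

end
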